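(* Let $(X,T),(Y,S)$ be topological dynamical systems and $f\in C(X\times Y)$. (a) If $(Y,S)$ has the specification property, then $\delta(f)\le\gamma(f)$. (b) If $(X,T)$ has the specification property, then $\delta(f)\ge\gamma(f)$.
   Context: A topological dynamical system $(X,T)$: $X$ compact metrizable, $T$ a homeomorphism. Write $\mathbb{A}_kf(x,y)=\frac1k\sum_{j=0}^{k-1}f(T^jx,S^jy)$. $\gamma(f)=\sup_{y\in Y}\inf_{x\in X}\limsup_{k\to\infty}\mathbb{A}_kf(x,y)$ and $\delta(f)=\limsup_{k\to\infty}\max_{y\in Y}\min_{x\in X}\mathbb{A}_kf(x,y)$. A specification in $X$ is $\xi=(x_i,[a_i,b_i])_{i=1}^n$ with integers $a_1\le b_1<a_2\le\dots<a_n\le b_n$; $D$-spaced if $a_{i+1}-b_i\ge D$; $x$ is an $\eta$-tracing if $d(T^jx,T^jx_i)<\eta$ for all $i$, $j\in[a_i,b_i]$ ($d$ a compatible metric). $(X,T)$ has the specification property if for each $\eta>0$ there is $D(\eta)\in\mathbb{N}$ such that every $D(\eta)$-spaced specification admits an $\eta$-tracing. *)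

theory Defs
  imports "HOL-Analysis.Analysis" "HOL-Library.Liminf_Limsup"
begin

definition tds :: "'a::metric_space set \<Rightarrow> ('a \<Rightarrow> 'a) \<Rightarrow> bool" where
  "tds X T \<longleftrightarrow> compact X \<and> (\<exists>g. homeomorphism X X T g)"

definition ziter :: "'a set \<Rightarrow> ('a \<Rightarrow> 'a) \<Rightarrow> int \<Rightarrow> 'a \<Rightarrow> 'a" where
  "ziter X T j x = (if 0 \<le> j then (T ^^ nat j) x else (inv_into X T ^^ nat (- j)) x)"

text \<open>Specification xi = (x_i,[a_i,b_i]) for i < n (0-based), with a_i \<le> b_i < a_(i+1);
  D-spaced if a_(i+1) - b_i \<ge> D; x is an eta-tracing if d(T^j x, T^j x_i) < eta for
  all i and j in [a_i,b_i].\<close>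
definition specification_property :: "'a::metric_space set \<Rightarrow> ('a \<Rightarrow> 'a) \<Rightarrow> bool" where
  "specification_property X T \<longleftrightarrow>
     (\<forall>\<eta>>0. \<exists>D::nat. \<forall>(n::nat) (xs::nat \<Rightarrow> 'a) (a::nat \<Rightarrow> int) (b::nat \<Rightarrow> int).
        ((\<forall>i<n. xs i \<in> X \<and> a i \<le> b i) \<and>
         (\<forall>i. Suc i < n \<longrightarrow> b i < a (Suc i) \<and> a (Suc i) - b i \<ge> int D))
        \<longrightarrow> (\<exists>x\<in>X. \<forall>i<n. \<forall>j\<in>{a i..b i}.
               dist (ziter X T j x) (ziter X T j (xs i)) < \<eta>))"

definition avg :: "('a \<Rightarrow> 'a) \<Rightarrow> ('b \<Rightarrow> 'b) \<Rightarrow> ('a \<times> 'b \<Rightarrow> real) \<Rightarrow> nat \<Rightarrow> 'a \<Rightarrow> 'b \<Rightarrow> real" where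
  "avg T S f k x y = (1 / real k) * (\<Sum>j<k. f ((T ^^ j) x, (S ^^ j) y))"

definition gamma :: "'a set \<Rightarrow> ('a \<Rightarrow> 'a) \<Rightarrow> 'b set \<Rightarrow> ('b \<Rightarrow> 'b) \<Rightarrow> ('a \<times> 'b \<Rightarrow> real) \<Rightarrow> ereal" where
  "gamma X T Y S f = (SUP y\<in>Y. INF x\<in>X. limsup (\<lambda>k. ereal (avg T S f k x y)))"

text \<open>delta(f) = limsup_k max_y min_x A_k f(x,y); max/min are attained (compactness,
  continuity), so they coincide with SUP/INF.\<close>
definition delta :: "'a set \<Rightarrow> ('a \<Rightarrow> 'a) \<Rightarrow> 'b set \<Rightarrow> ('b \<Rightarrow> 'b) \<Rightarrow> ('a \<times> 'b \<Rightarrow> real) \<Rightarrow> ereal" where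
  "delta X T Y S f = limsup (\<lambda>k. SUP y\<in>Y. INF x\<in>X. ereal (avg T S f k x y))"

end

theory Submission
  imports Defs
begin

(* Both inequalities come from gluing orbit segments with the specification property and
   comparing ergodic sums block by block, using the uniform continuity of f.
   (a) If c < delta(f), there are arbitrarily large k and points y' with A_k f(x,y') > c for
   every x. A single y in Y traces such segments, of lengths growing so fast that the part of
   the orbit before a block is negligible; at the end of each block the average A f(x,y) is then
   almost > c, for every x.
   (b) If delta(f) < c, then for all large L every y' has some x with A_L f(x,y') < c. For a
   fixed y, a single x in X traces such segments for the points S^(q(L+D)) y, placed
   periodically with gaps D, so that limsup_k A_k f(x,y) <= c + O(D/L). *)

lemma funpow_in_invariant: "T ` X \<subseteq> X \<Longrightarrow> x \<in> X \<Longrightarrow> (T ^^ n) x \<in> X"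
  by (induction n) auto

lemma continuous_on_funpow:
  assumes "continuous_on X T" "T ` X \<subseteq> X"
  shows "continuous_on X (T ^^ n)"
proof (induction n)
  case (Suc n)
  have "continuous_on X (\<lambda>x. T ((T ^^ n) x))"
    using assms funpow_in_invariant[OF assms(2)] by (blast intro: continuous_on_compose2[OF _ Suc])
  then show ?case
    by simp
qed simp

lemma funpow_inv_into_cancel:
  assumes "T ` X = X" "x \<in> X"
  shows "(T ^^ n) ((inv_into X T ^^ n) x) = x"
proof (induction n)
  case (Suc n)
  have "inv_into X T ` X \<subseteq> X"
    using assms(1) by (auto intro: inv_into_into)
  then have "(inv_into X T ^^ n) x \<in> X"
    using assms(2) by (rule funpow_in_invariant)
  then have "T (inv_into X T ((inv_into X T ^^ n) x)) = (inv_into X T ^^ n) x"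
    using assms(1) by (simp add: f_inv_into_f)
  with Suc show ?case
    by (simp add: funpow_swap1)
qed simp

lemma sum_lessThan_add: "(\<Sum>j<m + (n::nat). g j) = (\<Sum>j<m. g j) + (\<Sum>i<n. g (m + i))"
  by (induction n) (simp_all add: add.assoc)

lemma avg_eq_mean: "avg T S f k x y = (\<Sum>j<k. f ((T ^^ j) x, (S ^^ j) y)) / k"
  by (simp add: avg_def)

lemma mult_avg_eq_sum: "k * avg T S f k x y = (\<Sum>j<k. f ((T ^^ j) x, (S ^^ j) y))"
  by (simp add: avg_eq_mean)

lemma abs_sum_diff_le:
  fixes u v :: "nat \<Rightarrow> real"
  assumes "\<And>i. i < L \<Longrightarrow> \<bar>u i - v i\<bar> \<le> e"
  shows "\<bar>(\<Sum>i<L. u i) - (\<Sum>i<L. v i)\<bar> \<le> L * e"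
proof -
  have "\<bar>(\<Sum>i<L. u i) - (\<Sum>i<L. v i)\<bar> \<le> (\<Sum>i<L. \<bar>u i - v i\<bar>)"
    by (simp only: sum_subtractf[symmetric] sum_abs)
  also have "\<dots> \<le> (\<Sum>i<L. e)"
    using assms by (intro sum_mono) simp
  finally show ?thesis
    by simp
qed

lemma sum_le_of_periodic_blocks:
  fixes g :: "nat \<Rightarrow> real"
  assumes "\<And>j. g j \<le> M" and "\<And>q. (\<Sum>i<L. g (q * (L + D) + i)) \<le> 0"
  shows "(\<Sum>j<q * (L + D) + r. g j) \<le> real q * D * M + r * M"
  using assms
proof (induction q arbitrary: g)
  case 0
  have "(\<Sum>j<r. g j) \<le> (\<Sum>j<r. M)"
    by (intro sum_mono 0)
  then show ?case by simp
next
  case (Suc q)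
  have split: "(\<Sum>j<Suc q * (L + D) + r. g j)
      = (\<Sum>j<L. g j) + (\<Sum>i<D. g (L + i)) + (\<Sum>i<q * (L + D) + r. g (L + D + i))"
    using sum_lessThan_add[of g "L + D" "q * (L + D) + r"] sum_lessThan_add[of g L D]
    by (simp add: add.assoc)
  have "(\<Sum>j<L. g j) \<le> 0"
    using Suc.prems(2)[of 0] by simp
  moreover have "(\<Sum>i<D. g (L + i)) \<le> (\<Sum>i<D. M)"
    by (intro sum_mono Suc.prems(1))
  moreover have "(\<Sum>i<q * (L + D) + r. g (L + D + i)) \<le> real q * D * M + r * M"
  proof (rule Suc.IH)
    show "(\<Sum>i<L. g (L + D + (p * (L + D) + i))) \<le> 0" for p
      using Suc.prems(2)[of "Suc p"] by (simp add: algebra_simps)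
  qed (rule Suc.prems(1))
  ultimately show ?case
    unfolding split by (simp add: algebra_simps)
qed

lemma limsup_mean_le_of_periodic_blocks:
  fixes u :: "nat \<Rightarrow> real"
  assumes bound: "\<And>j. u j \<le> c + M" and "0 \<le> M" "0 < L"
    and blocks: "\<And>q. (\<Sum>i<L. u (q * (L + D) + i)) \<le> L * c"
  shows "limsup (\<lambda>k. ereal ((\<Sum>j<k. u j) / k)) \<le> ereal (c + D * M / (L + D))"
proof -
  define P where "P = L + D"
  have P: "0 < P"
    using \<open>0 < L\<close> by (simp add: P_def)
  have mean_le: "(\<Sum>j<k. u j) / k \<le> c + D * M / P + P * M / k" if "0 < k" for k
  proof -
    define q r where "q = k div P" and "r = k mod P"
    have k: "k = q * P + r" and "r < P"
      using P by (simp_all add: q_def r_def)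
    have "(\<Sum>j<k. u j - c) \<le> real q * D * M + r * M"
      unfolding k P_def
      using bound blocks by (intro sum_le_of_periodic_blocks) (simp_all add: sum_subtractf algebra_simps)
    moreover have "q * D * M \<le> k * D * M / P"
    proof -
      have "real q * P \<le> k"
        unfolding k by simp
      then have "real q * P * (D * M) / P \<le> k * (D * M) / P"
        using P \<open>0 \<le> M\<close> by (intro divide_right_mono mult_right_mono) simp_all
      then show ?thesis
        using P by simp
    qed
    moreover have "r * M \<le> P * M"
      using \<open>r < P\<close> \<open>0 \<le> M\<close> by (simp add: mult_right_mono)
    moreover have "(\<Sum>j<k. u j - c) = (\<Sum>j<k. u j) - k * c"
      by (simp add: sum_subtractf)
    moreover have "k * (c + D * M / P + P * M / k) = k * c + k * D * M / P + P * M"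
      using that by (simp add: field_simps)
    ultimately have "(\<Sum>j<k. u j) \<le> (c + D * M / P + P * M / k) * k"
      by (simp add: mult.commute)
    then show ?thesis
      using that by (simp add: pos_divide_le_eq)
  qed
  have "limsup (\<lambda>k. ereal ((\<Sum>j<k. u j) / k)) \<le> limsup (\<lambda>k. ereal (c + D * M / P + P * M / k))"
    using mean_le by (intro Limsup_mono eventually_sequentiallyI[of 1]) simp
  also have "\<dots> = ereal (c + D * M / P)"
    by (intro lim_imp_Limsup) (auto intro!: tendsto_eq_intros)
  finally show ?thesis
    by (simp add: P_def)
qed

lemma exists_block_length:
  fixes K D :: nat and M e :: real
  assumes "0 < e"
  obtains L :: nat where "K \<le> L" "0 < L" "D * M / (real L + D) \<le> e"
proof
  define L where "L = Suc (max K (nat \<lceil>D * M / e\<rceil>))"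
  show "K \<le> L" "0 < L"
    by (simp_all add: L_def)
  have "D * M / e \<le> L"
    unfolding L_def by linarith
  then have "D * M \<le> e * L"
    using assms by (simp add: pos_divide_le_eq mult.commute)
  also have "\<dots> \<le> e * (L + D)"
    using assms by simp
  finally show "D * M / (real L + D) \<le> e"
    using \<open>0 < L\<close> by (simp add: pos_divide_le_eq mult.commute)
qed

lemma le_limsup_mean_of_sparse_blocks:
  fixes u :: "nat \<Rightarrow> real"
  assumes bound: "\<And>j. c - M \<le> u j" and "0 \<le> M"
    and blocks: "\<And>n. len n * c \<le> (\<Sum>i<len n. u (a n + i))"
    and sparse: "\<And>n. Suc n * a n \<le> len n"
    and pos: "\<And>n. 0 < len n" and disjoint: "\<And>n. a n + len n \<le> a (Suc n)"
  shows "ereal c \<le> limsup (\<lambda>k. ereal ((\<Sum>j<k. u j) / k))"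
proof -
  define t where "t n = a n + len n" for n
  have "t n < t (Suc n)" for n
    using pos[of "Suc n"] disjoint[of n] by (simp add: t_def)
  then have "strict_mono t"
    by (simp add: strict_mono_Suc_iff)
  have mean_ge: "c - M / Suc n \<le> (\<Sum>j<t n. u j) / t n" for n
  proof -
    have "(\<Sum>j<a n. c - M) \<le> (\<Sum>j<a n. u j)"
      by (intro sum_mono bound)
    then have "t n * c - a n * M \<le> (\<Sum>j<t n. u j)"
      using blocks[of n] unfolding t_def sum_lessThan_add by (simp add: algebra_simps)
    moreover have "real (Suc n) * a n \<le> t n"
      using sparse[of n] unfolding t_def by (metis of_nat_le_iff of_nat_mult trans_le_add2)
    then have "a n \<le> t n / Suc n"
      by (simp add: pos_le_divide_eq mult.commute)
    then have "a n * M \<le> t n * (M / Suc n)"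
      using mult_right_mono[OF _ \<open>0 \<le> M\<close>] by fastforce
    ultimately have "t n * (c - M / Suc n) \<le> (\<Sum>j<t n. u j)"
      by (simp add: algebra_simps)
    moreover have "0 < t n"
      using pos by (simp add: t_def add_pos_pos)
    ultimately show ?thesis
      by (simp add: pos_le_divide_eq mult.commute)
  qed
  have "(\<lambda>n. M / Suc n) \<longlonglongrightarrow> 0"
    using LIMSEQ_Suc[OF lim_const_over_n[of M]] by simp
  then have "(\<lambda>n. ereal (c - M / Suc n)) \<longlonglongrightarrow> ereal c"
    using tendsto_diff[OF tendsto_const, of _ 0 sequentially c] by simp
  then have "ereal c = limsup (\<lambda>n. ereal (c - M / Suc n))"
    by (intro lim_imp_Limsup[symmetric]) simp_all
  also have "\<dots> \<le> limsup ((\<lambda>k. ereal ((\<Sum>j<k. u j) / k)) \<circ> t)"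
    using mean_ge by (intro Limsup_mono always_eventually) simp
  also have "\<dots> \<le> limsup (\<lambda>k. ereal ((\<Sum>j<k. u j) / k))"
    using \<open>strict_mono t\<close> by (rule limsup_subseq_mono)
  finally show ?thesis .
qed

lemma sparse_block_sequence:
  assumes "\<exists>\<^sub>F k in sequentially. \<exists>z. Q k z"
  obtains a len :: "nat \<Rightarrow> nat" and zs
  where "\<And>n. Q (len n) (zs n)" "\<And>n. a (Suc n) = a n + len n + D" "\<And>n. Suc n * Suc (a n) \<le> len n"
proof -
  have "\<forall>N. \<exists>k\<ge>N. \<exists>z. Q k z"
    using assms unfolding frequently_sequentially .
  then obtain kk where "\<And>N. N \<le> kk N \<and> (\<exists>z. Q (kk N) z)"
    by metis
  then obtain zz where kk: "\<And>N. N \<le> kk N \<and> Q (kk N) (zz N)"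
    by metis
  define a where "a = rec_nat 0 (\<lambda>n an. an + kk (Suc n * Suc an) + D)"
  define len where "len n = kk (Suc n * Suc (a n))" for n
  show thesis
    by (rule that[of len "\<lambda>n. zz (Suc n * Suc (a n))" a]) (simp_all add: kk a_def len_def)
qed

lemma specification_property_nat:
  assumes "specification_property X T" "0 < \<eta>"
  obtains D :: nat where "\<And>n xs a b. (\<And>i. i < n \<Longrightarrow> xs i \<in> X \<and> a i \<le> b i)
    \<Longrightarrow> (\<And>i. Suc i < n \<Longrightarrow> b i + D \<le> a (Suc i))
    \<Longrightarrow> \<exists>x\<in>X. \<forall>i<n. \<forall>j\<in>{a i..b i}. dist ((T ^^ j) x) ((T ^^ j) (xs i)) < \<eta>"
proof -
  obtain D0 :: nat where D0: "\<forall>n xs (a :: nat \<Rightarrow> int) b.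
      ((\<forall>i<n. xs i \<in> X \<and> a i \<le> b i) \<and> (\<forall>i. Suc i < n \<longrightarrow> b i < a (Suc i) \<and> a (Suc i) - b i \<ge> int D0))
      \<longrightarrow> (\<exists>x\<in>X. \<forall>i<n. \<forall>j\<in>{a i..b i}. dist (ziter X T j x) (ziter X T j (xs i)) < \<eta>)"
    using assms unfolding specification_property_def by blast
  show thesis
  proof (rule that[of "Suc D0"])
    fix n xs and a b :: "nat \<Rightarrow> nat"
    assume "\<And>i. i < n \<Longrightarrow> xs i \<in> X \<and> a i \<le> b i" and "\<And>i. Suc i < n \<Longrightarrow> b i + Suc D0 \<le> a (Suc i)"
    then have "\<exists>x\<in>X. \<forall>i<n. \<forall>j\<in>{int (a i)..int (b i)}. dist (ziter X T j x) (ziter X T j (xs i)) < \<eta>"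
      by (intro D0[rule_format]) force
    then obtain x where "x \<in> X"
      and x: "\<And>i j. i < n \<Longrightarrow> j \<in> {int (a i)..int (b i)} \<Longrightarrow> dist (ziter X T j x) (ziter X T j (xs i)) < \<eta>"
      by blast
    have "dist ((T ^^ j) x) ((T ^^ j) (xs i)) < \<eta>" if "i < n" "j \<in> {a i..b i}" for i j
      using x[OF that(1), of "int j"] that(2) by (simp add: ziter_def)
    with \<open>x \<in> X\<close> show "\<exists>x\<in>X. \<forall>i<n. \<forall>j\<in>{a i..b i}. dist ((T ^^ j) x) ((T ^^ j) (xs i)) < \<eta>"
      by blast
  qed
qed

lemma specification_property_infinite:
  assumes "compact X" "continuous_on X T" "T ` X \<subseteq> X" "specification_property X T" "0 < \<eta>"
  obtains D :: nat where "\<And>xs a b. (\<And>i. xs i \<in> X \<and> a i \<le> b i \<and> b i + D \<le> a (Suc i))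
    \<Longrightarrow> \<exists>x\<in>X. \<forall>i. \<forall>j\<in>{a i..b i}. dist ((T ^^ j) x) ((T ^^ j) (xs i)) \<le> \<eta>"
proof -
  obtain D where D: "\<And>n xs a b. (\<And>i. i < n \<Longrightarrow> xs i \<in> X \<and> a i \<le> b i)
    \<Longrightarrow> (\<And>i. Suc i < n \<Longrightarrow> b i + D \<le> a (Suc i))
    \<Longrightarrow> \<exists>x\<in>X. \<forall>i<n. \<forall>j\<in>{a i..b i}. dist ((T ^^ j) x) ((T ^^ j) (xs i)) < \<eta>"
    using specification_property_nat[OF assms(4,5)] by blast
  show thesis
  proof (rule that)
    fix xs a b
    assume blocks: "\<And>i. xs i \<in> X \<and> a i \<le> b i \<and> b i + D \<le> a (Suc i)"
    define C where "C i = X \<inter> (\<Inter>j\<in>{a i..b i}. X \<inter> (T ^^ j) -` cball ((T ^^ j) (xs i)) \<eta>)" for i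
    have "X \<inter> (\<Inter>i\<in>UNIV. C i) \<noteq> {}"
    proof (rule compact_imp_fip_image[OF assms(1)])
      have "closed X"
        using assms(1) by (rule compact_imp_closed)
      then show "closed (C i)" for i
        unfolding C_def using continuous_on_funpow[OF assms(2,3)]
        by (intro closed_Int closed_INT ballI continuous_closed_preimage closed_cball)
    next
      fix I :: "nat set"
      assume "finite I"
      then obtain N where "I \<subseteq> {..<N}"
        using finite_nat_bounded by blast
      obtain x where "x \<in> X" and "\<forall>i<N. \<forall>j\<in>{a i..b i}. dist ((T ^^ j) x) ((T ^^ j) (xs i)) < \<eta>"
        using D[of N xs a b] blocks by blast
      with \<open>I \<subseteq> {..<N}\<close> have "x \<in> X \<inter> (\<Inter>i\<in>I. C i)"
        by (fastforce simp: C_def dist_commute)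
      then show "X \<inter> (\<Inter>i\<in>I. C i) \<noteq> {}"
        by blast
    qed
    then obtain x where "x \<in> X" and "\<And>i. x \<in> C i"
      by blast
    then have "dist ((T ^^ j) x) ((T ^^ j) (xs i)) \<le> \<eta>" if "j \<in> {a i..b i}" for i j
      using that unfolding C_def by (fastforce simp: dist_commute)
    with \<open>x \<in> X\<close> show "\<exists>x\<in>X. \<forall>i. \<forall>j\<in>{a i..b i}. dist ((T ^^ j) x) ((T ^^ j) (xs i)) \<le> \<eta>"
      by blast
  qed
qed

lemma uniformly_continuous_on_Times_fst:
  fixes f :: "'a::metric_space \<times> 'b::metric_space \<Rightarrow> 'c::metric_space"
  assumes "uniformly_continuous_on (A \<times> B) f" "0 < e"
  obtains d where "0 < d" "\<And>a a' b. a \<in> A \<Longrightarrow> a' \<in> A \<Longrightarrow> b \<in> B \<Longrightarrow> dist a a' < d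
    \<Longrightarrow> dist (f (a, b)) (f (a', b)) < e"
proof -
  obtain d where "0 < d" and d: "\<forall>p\<in>A \<times> B. \<forall>p'\<in>A \<times> B. dist p' p < d \<longrightarrow> dist (f p') (f p) < e"
    using assms unfolding uniformly_continuous_on_def by blast
  show thesis
    using d by (intro that[OF \<open>0 < d\<close>]) (simp add: dist_Pair_Pair)
qed

lemma tdsD:
  assumes "tds X T"
  shows "compact X" "continuous_on X T" "T ` X = X"
  using assms unfolding tds_def homeomorphism_def by auto

lemma tds_orbit_bound:
  assumes "tds X T" "tds Y S" "continuous_on (X \<times> Y) f"
  obtains B :: real where "0 < B"
    "\<And>j x y. x \<in> X \<Longrightarrow> y \<in> Y \<Longrightarrow> \<bar>f ((T ^^ j) x, (S ^^ j) y)\<bar> \<le> B"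
proof -
  have "bounded (f ` (X \<times> Y))"
    using assms(3) tdsD(1)[OF assms(1)] tdsD(1)[OF assms(2)]
    by (intro compact_imp_bounded compact_continuous_image compact_Times)
  then obtain B where "0 < B" and B: "\<And>p. p \<in> X \<times> Y \<Longrightarrow> \<bar>f p\<bar> \<le> B"
    unfolding bounded_pos by auto
  have "((T ^^ j) x, (S ^^ j) y) \<in> X \<times> Y" if "x \<in> X" "y \<in> Y" for j x y
    using that funpow_in_invariant[of T X] funpow_in_invariant[of S Y] tdsD(3)[OF assms(1)] tdsD(3)[OF assms(2)]
    by simp
  with \<open>0 < B\<close> B show thesis
    by (blast intro: that)
qed

lemma specification_block_sums:
  fixes X :: "'a::metric_space set" and Y :: "'b::metric_space set" and f :: "'a \<times> 'b \<Rightarrow> real"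
  assumes "tds X T" "compact Y" "S ` Y \<subseteq> Y" "continuous_on (X \<times> Y) f"
    and "specification_property X T" "0 < e"
  obtains D :: nat where "\<And>a len xs. (\<And>n. xs n \<in> X \<and> a n + len n + D \<le> a (Suc n))
    \<Longrightarrow> \<exists>x\<in>X. \<forall>y\<in>Y. \<forall>n. \<bar>(\<Sum>i<len n. f ((T ^^ (a n + i)) x, (S ^^ (a n + i)) y))
                        - len n * avg T S f (len n) (xs n) ((S ^^ a n) y)\<bar> \<le> len n * e"
proof -
  note X = tdsD[OF assms(1)]
  have "uniformly_continuous_on (X \<times> Y) f"
    using assms(2,4) X(1) by (simp add: compact_Times compact_uniformly_continuous)
  then obtain d where "0 < d" and d: "\<And>x x' y. x \<in> X \<Longrightarrow> x' \<in> X \<Longrightarrow> y \<in> Y \<Longrightarrow> dist x x' < d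
      \<Longrightarrow> dist (f (x, y)) (f (x', y)) < e"
    using uniformly_continuous_on_Times_fst \<open>0 < e\<close> by blast
  obtain D where D: "\<And>xs a b. (\<And>i. xs i \<in> X \<and> a i \<le> b i \<and> b i + D \<le> a (Suc i))
      \<Longrightarrow> \<exists>x\<in>X. \<forall>i. \<forall>j\<in>{a i..b i}. dist ((T ^^ j) x) ((T ^^ j) (xs i)) \<le> d / 2"
    using specification_property_infinite[OF X(1,2) _ assms(5), of "d / 2"] X(3) \<open>0 < d\<close> by auto
  show thesis
  proof (rule that)
    fix a len xs
    assume blocks: "\<And>n. xs n \<in> X \<and> a n + len n + D \<le> a (Suc n)"
    have inv_X: "inv_into X T ` X \<subseteq> X"
      using X(3) by (auto intro: inv_into_into)
    \<comment> \<open>Pull the block-start points back so that their orbits pass through them at time a n.\<close>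
    define xs' where "xs' n = (inv_into X T ^^ a n) (xs n)" for n
    have "xs' n \<in> X" for n
      unfolding xs'_def using blocks inv_X by (blast intro: funpow_in_invariant)
    with blocks obtain x where "x \<in> X"
      and trace: "\<And>n j. j \<in> {a n..a n + len n} \<Longrightarrow> dist ((T ^^ j) x) ((T ^^ j) (xs' n)) \<le> d / 2"
      using D[of xs' a "\<lambda>n. a n + len n"] by fastforce
    have "\<bar>(\<Sum>i<len n. f ((T ^^ (a n + i)) x, (S ^^ (a n + i)) y))
          - len n * avg T S f (len n) (xs n) ((S ^^ a n) y)\<bar> \<le> len n * e" if "y \<in> Y" for y n
      unfolding mult_avg_eq_sum
    proof (rule abs_sum_diff_le)
      fix i
      assume "i < len n"
      have "(T ^^ (a n + i)) (xs' n) = (T ^^ i) (xs n)"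
        using funpow_inv_into_cancel[OF X(3)] blocks
        by (simp add: xs'_def add.commute[of "a n"] funpow_add)
      moreover have "(S ^^ (a n + i)) y = (S ^^ i) ((S ^^ a n) y)"
        by (simp add: add.commute[of "a n"] funpow_add)
      moreover have "dist ((T ^^ (a n + i)) x) ((T ^^ (a n + i)) (xs' n)) < d"
        using trace[of "a n + i" n] \<open>i < len n\<close> \<open>0 < d\<close> by simp
      ultimately show "\<bar>f ((T ^^ (a n + i)) x, (S ^^ (a n + i)) y)
          - f ((T ^^ i) (xs n), (S ^^ i) ((S ^^ a n) y))\<bar> \<le> e"
        using d[of "(T ^^ (a n + i)) x" "(T ^^ i) (xs n)" "(S ^^ i) ((S ^^ a n) y)"]
          funpow_in_invariant[of T X] funpow_in_invariant[OF assms(3)] X(3) \<open>x \<in> X\<close> blocks \<open>y \<in> Y\<close>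
        by (simp add: dist_real_def)
    qed
    with \<open>x \<in> X\<close> show "\<exists>x\<in>X. \<forall>y\<in>Y. \<forall>n. \<bar>(\<Sum>i<len n. f ((T ^^ (a n + i)) x, (S ^^ (a n + i)) y))
                        - len n * avg T S f (len n) (xs n) ((S ^^ a n) y)\<bar> \<le> len n * e"
      by blast
  qed
qed

lemma specification_block_sums_snd:
  fixes X :: "'a::metric_space set" and Y :: "'b::metric_space set" and f :: "'a \<times> 'b \<Rightarrow> real"
  assumes "compact X" "T ` X \<subseteq> X" "tds Y S" "continuous_on (X \<times> Y) f"
    and "specification_property Y S" "0 < e"
  obtains D :: nat where "\<And>a len ys. (\<And>n. ys n \<in> Y \<and> a n + len n + D \<le> a (Suc n))
    \<Longrightarrow> \<exists>y\<in>Y. \<forall>x\<in>X. \<forall>n. \<bar>(\<Sum>i<len n. f ((T ^^ (a n + i)) x, (S ^^ (a n + i)) y))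
                        - len n * avg T S f (len n) ((T ^^ a n) x) (ys n)\<bar> \<le> len n * e"
proof -
  have swap_cont: "continuous_on (Y \<times> X) (\<lambda>(y, x). f (x, y))"
    using continuous_on_swap_args[of X Y "\<lambda>x y. f (x, y)"] assms(4) by simp
  obtain D where D: "\<And>a len ys. (\<And>n. ys n \<in> Y \<and> a n + len n + D \<le> a (Suc n))
    \<Longrightarrow> \<exists>y\<in>Y. \<forall>x\<in>X. \<forall>n. \<bar>(\<Sum>i<len n. f ((T ^^ (a n + i)) x, (S ^^ (a n + i)) y))
         - len n * avg S T (\<lambda>(y, x). f (x, y)) (len n) (ys n) ((T ^^ a n) x)\<bar> \<le> len n * e"
    using specification_block_sums[OF assms(3,1,2) swap_cont assms(5,6)] by simp blast
  have "avg S T (\<lambda>(y, x). f (x, y)) k y x = avg T S f k x y" for k x y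
    by (simp add: avg_def)
  with D show thesis
    by (intro that) auto
qed

lemma eventually_avg_less_of_delta_less:
  assumes "delta X T Y S f < ereal c"
  shows "eventually (\<lambda>k. \<forall>y\<in>Y. \<exists>x\<in>X. avg T S f k x y < c) sequentially"
proof -
  have "eventually (\<lambda>k. (SUP y\<in>Y. INF x\<in>X. ereal (avg T S f k x y)) < ereal c) sequentially"
    using assms unfolding delta_def by (rule Limsup_lessD)
  then show ?thesis
  proof (rule eventually_mono)
    fix k
    assume less: "(SUP y\<in>Y. INF x\<in>X. ereal (avg T S f k x y)) < ereal c"
    have "(INF x\<in>X. ereal (avg T S f k x y)) < ereal c" if "y \<in> Y" for y
      using order.strict_trans1[OF SUP_upper[OF that] less] .
    then show "\<forall>y\<in>Y. \<exists>x\<in>X. avg T S f k x y < c"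
      by (auto simp: INF_less_iff)
  qed
qed

lemma frequently_avg_greater_of_less_delta:
  assumes "ereal c < delta X T Y S f"
  shows "\<exists>\<^sub>F k in sequentially. \<exists>y. y \<in> Y \<and> (\<forall>x\<in>X. c < avg T S f k x y)"
proof -
  have "\<exists>\<^sub>F k in sequentially. ereal c < (SUP y\<in>Y. INF x\<in>X. ereal (avg T S f k x y))"
  proof (rule ccontr)
    assume "\<not> ?thesis"
    then have "eventually (\<lambda>k. (SUP y\<in>Y. INF x\<in>X. ereal (avg T S f k x y)) \<le> ereal c) sequentially"
      by (simp add: not_frequently not_less)
    then have "delta X T Y S f \<le> ereal c"
      unfolding delta_def by (rule Limsup_bounded)
    with assms show False
      by simp
  qed
  then show ?thesis
  proof (rule frequently_elim1)
    fix k
    assume "ereal c < (SUP y\<in>Y. INF x\<in>X. ereal (avg T S f k x y))"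
    then obtain y where "y \<in> Y" "ereal c < (INF x\<in>X. ereal (avg T S f k x y))"
      by (auto simp: less_SUP_iff)
    then show "\<exists>y. y \<in> Y \<and> (\<forall>x\<in>X. c < avg T S f k x y)"
      using less_INF_D by fastforce
  qed
qed

lemma exists_orbit_with_periodic_block_sums_le:
  fixes X :: "'a::metric_space set" and Y :: "'b::metric_space set" and f :: "'a \<times> 'b \<Rightarrow> real"
    and M :: real
  assumes tX: "tds X T" and tY: "tds Y S" and cont: "continuous_on (X \<times> Y) f"
    and spec: "specification_property X T" and less: "delta X T Y S f < ereal c"
    and "y \<in> Y" "0 < e"
  obtains x L D where "x \<in> X" "0 < L" "D * M / (real L + D) \<le> e"
    "\<And>q. (\<Sum>i<L. f ((T ^^ (q * (L + D) + i)) x, (S ^^ (q * (L + D) + i)) y)) \<le> L * (c + e)"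
proof -
  obtain K where K: "\<And>k y'. K \<le> k \<Longrightarrow> y' \<in> Y \<Longrightarrow> \<exists>x\<in>X. avg T S f k x y' < c"
    using eventually_avg_less_of_delta_less[OF less] unfolding eventually_sequentially by blast
  obtain D where D: "\<And>a len xs. (\<And>n. xs n \<in> X \<and> a n + len n + D \<le> a (Suc n))
    \<Longrightarrow> \<exists>x\<in>X. \<forall>y\<in>Y. \<forall>n. \<bar>(\<Sum>i<len n. f ((T ^^ (a n + i)) x, (S ^^ (a n + i)) y))
                        - len n * avg T S f (len n) (xs n) ((S ^^ a n) y)\<bar> \<le> len n * e"
    using specification_block_sums[OF tX tdsD(1)[OF tY] _ cont spec \<open>0 < e\<close>] tdsD(3)[OF tY] by blast
  obtain L where "K \<le> L" "0 < L" and L: "D * M / (real L + D) \<le> e"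
    using exists_block_length[OF \<open>0 < e\<close>] by blast
  have "\<forall>q. \<exists>x\<in>X. avg T S f L x ((S ^^ (q * (L + D))) y) < c"
    using K[OF \<open>K \<le> L\<close>] funpow_in_invariant[of S Y] tdsD(3)[OF tY] \<open>y \<in> Y\<close> by simp
  then obtain xs where xs: "\<And>q. xs q \<in> X" "\<And>q. avg T S f L (xs q) ((S ^^ (q * (L + D))) y) < c"
    by metis
  obtain x where "x \<in> X" and x: "\<And>q. \<bar>(\<Sum>i<L. f ((T ^^ (q * (L + D) + i)) x, (S ^^ (q * (L + D) + i)) y))
      - L * avg T S f L (xs q) ((S ^^ (q * (L + D))) y)\<bar> \<le> L * e"
    using D[of xs "\<lambda>q. q * (L + D)" "\<lambda>_. L"] xs(1) \<open>y \<in> Y\<close> by auto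
  show thesis
  proof (rule that[OF \<open>x \<in> X\<close> \<open>0 < L\<close> L])
    fix q
    have "L * avg T S f L (xs q) ((S ^^ (q * (L + D))) y) \<le> L * c"
      using xs(2)[of q] by (intro mult_left_mono) simp_all
    then show "(\<Sum>i<L. f ((T ^^ (q * (L + D) + i)) x, (S ^^ (q * (L + D) + i)) y)) \<le> L * (c + e)"
      using x[of q] by (simp add: abs_le_iff algebra_simps)
  qed
qed

lemma gamma_le_of_delta_less:
  fixes X :: "'a::metric_space set" and Y :: "'b::metric_space set" and f :: "'a \<times> 'b \<Rightarrow> real"
  assumes tX: "tds X T" and tY: "tds Y S" and cont: "continuous_on (X \<times> Y) f"
    and spec: "specification_property X T" and less: "delta X T Y S f < ereal c"
  shows "gamma X T Y S f \<le> ereal c"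
  unfolding gamma_def
proof (rule SUP_least)
  fix y assume "y \<in> Y"
  obtain c0 where c0: "delta X T Y S f < ereal c0" "c0 < c"
    using ereal_dense2[OF less] by auto
  define e where "e = (c - c0) / 2"
  have "0 < e" and "c = c0 + 2 * e"
    using \<open>c0 < c\<close> by (simp_all add: e_def field_simps)
  obtain B where "0 < B" and B: "\<And>j x y. x \<in> X \<Longrightarrow> y \<in> Y \<Longrightarrow> \<bar>f ((T ^^ j) x, (S ^^ j) y)\<bar> \<le> B"
    using tds_orbit_bound[OF tX tY cont] by blast
  define M where "M = B + \<bar>c0 + e\<bar>"
  obtain x L D where "x \<in> X" "0 < L" and L: "D * M / (real L + D) \<le> e"
    and blocks: "\<And>q. (\<Sum>i<L. f ((T ^^ (q * (L + D) + i)) x, (S ^^ (q * (L + D) + i)) y)) \<le> L * (c0 + e)"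
    using exists_orbit_with_periodic_block_sums_le[OF tX tY cont spec c0(1) \<open>y \<in> Y\<close> \<open>0 < e\<close>] by blast
  have "limsup (\<lambda>k. ereal (avg T S f k x y)) \<le> ereal (c0 + e + D * M / (real L + D))"
    unfolding avg_eq_mean
  proof (rule limsup_mean_le_of_periodic_blocks[OF _ _ \<open>0 < L\<close> blocks])
    show "f ((T ^^ j) x, (S ^^ j) y) \<le> c0 + e + M" for j
      using B[OF \<open>x \<in> X\<close> \<open>y \<in> Y\<close>, of j] abs_ge_minus_self[of "c0 + e"]
      by (simp add: M_def abs_le_iff)
  qed (use \<open>0 < B\<close> in \<open>simp add: M_def\<close>)
  also have "\<dots> \<le> ereal c"
    using L \<open>c = c0 + 2 * e\<close> unfolding ereal_less_eq(3) by linarith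
  finally show "(INF x\<in>X. limsup (\<lambda>k. ereal (avg T S f k x y))) \<le> ereal c"
    by (rule INF_lower2[OF \<open>x \<in> X\<close>])
qed

lemma exists_orbit_with_sparse_block_sums_ge:
  fixes X :: "'a::metric_space set" and Y :: "'b::metric_space set" and f :: "'a \<times> 'b \<Rightarrow> real"
  assumes tX: "tds X T" and tY: "tds Y S" and cont: "continuous_on (X \<times> Y) f"
    and spec: "specification_property Y S" and less: "ereal c < delta X T Y S f"
  obtains y a len where "y \<in> Y"
    "\<And>x n. x \<in> X \<Longrightarrow> len n * c \<le> (\<Sum>i<len n. f ((T ^^ (a n + i)) x, (S ^^ (a n + i)) y))"
    "\<And>n. a n + len n \<le> a (Suc n)" "\<And>n. Suc n * a n \<le> len n" "\<And>n. 0 < len n"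
proof -
  obtain c0 where "c < c0" and c0: "ereal c0 < delta X T Y S f"
    using ereal_dense2[OF less] by auto
  define e where "e = c0 - c"
  have "0 < e"
    using \<open>c < c0\<close> by (simp add: e_def)
  obtain D where D: "\<And>a len ys. (\<And>n. ys n \<in> Y \<and> a n + len n + D \<le> a (Suc n))
    \<Longrightarrow> \<exists>y\<in>Y. \<forall>x\<in>X. \<forall>n. \<bar>(\<Sum>i<len n. f ((T ^^ (a n + i)) x, (S ^^ (a n + i)) y))
                        - len n * avg T S f (len n) ((T ^^ a n) x) (ys n)\<bar> \<le> len n * e"
    using specification_block_sums_snd[OF tdsD(1)[OF tX] _ tY cont spec \<open>0 < e\<close>] tdsD(3)[OF tX]
    by blast
  obtain a len ys where ys: "\<And>n. ys n \<in> Y \<and> (\<forall>x\<in>X. c0 < avg T S f (len n) x (ys n))"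
    and a_Suc: "\<And>n. a (Suc n) = a n + len n + D" and len_ge: "\<And>n. Suc n * Suc (a n) \<le> len n"
  proof (rule sparse_block_sequence[where D = D, OF frequently_avg_greater_of_less_delta[OF c0]])
    fix a len ys
    assume "\<And>n. ys n \<in> Y \<and> (\<forall>x\<in>X. c0 < avg T S f (len n) x (ys n))"
      and "\<And>n. a (Suc n) = a n + len n + D" and "\<And>n. Suc n * Suc (a n) \<le> len n"
    then show thesis
      by (rule that)
  qed
  obtain y where "y \<in> Y" and y: "\<And>x n. x \<in> X \<Longrightarrow> \<bar>(\<Sum>i<len n. f ((T ^^ (a n + i)) x, (S ^^ (a n + i)) y))
      - len n * avg T S f (len n) ((T ^^ a n) x) (ys n)\<bar> \<le> len n * e"
    using D[of ys a len] ys a_Suc by auto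
  show thesis
  proof (rule that[OF \<open>y \<in> Y\<close>])
    fix x n
    assume "x \<in> X"
    then have "(T ^^ a n) x \<in> X"
      using funpow_in_invariant[of T X] tdsD(3)[OF tX] by simp
    then have "len n * c0 \<le> len n * avg T S f (len n) ((T ^^ a n) x) (ys n)"
      using ys by (intro mult_left_mono) (simp_all add: less_imp_le)
    then show "len n * c \<le> (\<Sum>i<len n. f ((T ^^ (a n + i)) x, (S ^^ (a n + i)) y))"
      using y[OF \<open>x \<in> X\<close>, of n] by (simp add: abs_le_iff e_def algebra_simps)
  next
    show "a n + len n \<le> a (Suc n)" "0 < len n" for n
      using len_ge[of n] by (simp_all add: a_Suc)
    show "Suc n * a n \<le> len n" for n
      using len_ge[of n] by (meson le_trans lessI less_imp_le mult_le_mono2)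
  qed
qed

lemma ereal_le_gamma_of_less_delta:
  fixes X :: "'a::metric_space set" and Y :: "'b::metric_space set" and f :: "'a \<times> 'b \<Rightarrow> real"
  assumes tX: "tds X T" and tY: "tds Y S" and cont: "continuous_on (X \<times> Y) f"
    and spec: "specification_property Y S" and less: "ereal c < delta X T Y S f"
  shows "ereal c \<le> gamma X T Y S f"
proof -
  obtain B where "0 < B" and B: "\<And>j x y. x \<in> X \<Longrightarrow> y \<in> Y \<Longrightarrow> \<bar>f ((T ^^ j) x, (S ^^ j) y)\<bar> \<le> B"
    using tds_orbit_bound[OF tX tY cont] by blast
  obtain y a len where "y \<in> Y"
    and blocks: "\<And>x n. x \<in> X \<Longrightarrow> len n * c \<le> (\<Sum>i<len n. f ((T ^^ (a n + i)) x, (S ^^ (a n + i)) y))"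
    and sparse: "\<And>n. a n + len n \<le> a (Suc n)" "\<And>n. Suc n * a n \<le> len n" "\<And>n. 0 < len n"
  proof (rule exists_orbit_with_sparse_block_sums_ge[OF tX tY cont spec less])
    fix y a len
    assume "y \<in> Y"
      and "\<And>x n. x \<in> X \<Longrightarrow> len n * c \<le> (\<Sum>i<len n. f ((T ^^ (a n + i)) x, (S ^^ (a n + i)) y))"
      and "\<And>n. a n + len n \<le> a (Suc n)" "\<And>n. Suc n * a n \<le> len n" "\<And>n. 0 < len n"
    then show thesis
      by (rule that)
  qed
  have "ereal c \<le> limsup (\<lambda>k. ereal (avg T S f k x y))" if "x \<in> X" for x
    unfolding avg_eq_mean
  proof (rule le_limsup_mean_of_sparse_blocks[where M = "B + \<bar>c\<bar>" and a = a and len = len])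
    show "c - (B + \<bar>c\<bar>) \<le> f ((T ^^ j) x, (S ^^ j) y)" for j
      using B[OF \<open>x \<in> X\<close> \<open>y \<in> Y\<close>, of j] abs_ge_self[of c] by (simp add: abs_le_iff)
  qed (use \<open>0 < B\<close> blocks[OF that] sparse in simp_all)
  then have "ereal c \<le> (INF x\<in>X. limsup (\<lambda>k. ereal (avg T S f k x y)))"
    by (rule INF_greatest)
  also have "\<dots> \<le> gamma X T Y S f"
    unfolding gamma_def by (rule SUP_upper[OF \<open>y \<in> Y\<close>])
  finally show ?thesis .
qed

theorem theorem2p13:
  fixes X :: "'a::metric_space set" and T :: "'a \<Rightarrow> 'a"
    and Y :: "'b::metric_space set" and S :: "'b \<Rightarrow> 'b"
    and f :: "'a \<times> 'b \<Rightarrow> real"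
  assumes "tds X T" and "tds Y S" and "X \<noteq> {}" and "Y \<noteq> {}"
    and "continuous_on (X \<times> Y) f"
  shows "(specification_property Y S \<longrightarrow> delta X T Y S f \<le> gamma X T Y S f)
       \<and> (specification_property X T \<longrightarrow> delta X T Y S f \<ge> gamma X T Y S f)"
proof (intro conjI impI)
  assume spec: "specification_property Y S"
  show "delta X T Y S f \<le> gamma X T Y S f"
  proof (rule dense_le)
    fix z assume "z < delta X T Y S f"
    then show "z \<le> gamma X T Y S f"
      by (cases z) (auto intro: ereal_le_gamma_of_less_delta[OF assms(1,2,5) spec])
  qed
next
  assume spec: "specification_property X T"
  show "gamma X T Y S f \<le> delta X T Y S f"
  proof (rule dense_ge)
    fix z assume "delta X T Y S f < z"
    then show "gamma X T Y S f \<le> z"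
      by (cases z) (auto intro: gamma_le_of_delta_less[OF assms(1,2,5) spec])
  qed
qed

end
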